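(* Let $\mathcal{C}$ be a translation based cipher over $V=(\mathbb{F}_2)^{mn}$ with a strongly proper round $h$, and suppose that for some integer $r$ every brick of the bricklayer transformation $\gamma_h$ satisfies either (A) $1<r<m$, the brick is differentially $2^r$-uniform and strongly $(r-1)$-anti-invariant; or (B) $1\le r<m$, the brick is weakly $2^r$-uniform and strongly $r$-anti-invariant (with the same alternative (A) or (B) for all bricks). Then $\Gamma_h(\mathcal{C})$ is primitive and is not a wreath product; that is, writing $mn=d$, it is not the case that $\Gamma_h(\mathcal{C})=(S_1\times\dots\times S_c).O.P$ with $T(V)=T_1\times\dots\times T_c$, where $c>1$ divides $d$, each $T_i$ is an abelian subgroup of $S_i$ of order $2^{d/c}$, each $S_i\cong\mathrm{Alt}(2^{d/c})$ or $\mathrm{Sym}(2^{d/c})$, the $S_i$ are all conjugate, $O\le\mathrm{Out}(S_1)\times\dots\times\mathrm{Out}(S_c)$, and $P$ permutes the $S_i$ transitively.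
   Context: Permutations act on the right. Let $m,n>1$ and $V=V_1\oplus\dots\oplus V_n$ with each $V_i\cong(\mathbb{F}_2)^m$. $\sigma_v:x\mapsto x+v$, $T(V)=\{\sigma_v:v\in V\}$. A bricklayer transformation is a permutation $\gamma$ of $V$ with permutations ("bricks") $\gamma_i$ of $V_i$ such that $(v_1+\dots+v_n)\gamma=v_1\gamma_1+\dots+v_n\gamma_n$. A wall is a nontrivial proper subspace of $V$ that is a sum of some $V_i$; $\lambda\in\mathrm{GL}(V)$ is a proper mixing layer if no wall is $\lambda$-invariant, and strongly proper if there are no walls $W,W'$ with $W\lambda=W'$. A tb cipher $\mathcal{C}=\{\tau_k:k\in\mathcal{K}\}$ has $\tau_k=\tau_{k,1}\cdots\tau_{k,l}$ with $\tau_{k,h}=\gamma_h\lambda_h\sigma_{\phi(k,h)}$, $\gamma_h$ a key-independent bricklayer transformation with $0\gamma_h=0$, $\lambda_h\in\mathrm{GL}(V)$ key-independent, $\phi:\mathcal{K}\times\{1,\dots,l\}\to V$; a round $h$ is proper if $\lambda_h$ is a proper mixing layer and $k\mapsto\phi(k,h)$ is onto $V$ (a tb cipher has at least one proper round), and strongly proper if moreover $\lambda_h$ is strongly proper. $\Gamma_h(\mathcal{C})=\langle\tau_{k,h}:k\in\mathcal{K}\rangle$. For $f:(\mathbb{F}_2)^m\to(\mathbb{F}_2)^m$, $\hat f_u(x)=f(x+u)+f(x)$. $f$ is differentially $\delta$-uniform if $|\{x:\hat f_u(x)=v\}|\le\delta$ for all $u\ne0$, all $v$; weakly $\delta$-uniform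 if $|\mathrm{Im}(\hat f_u)|>2^{m-1}/\delta$ for all $u\ne0$. For $1\le s<m$, $f$ is strongly $s$-anti-invariant if for any subspaces $U,W$ with $f(U)=W$, either $\dim U=\dim W<m-s$ or $U=W=(\mathbb{F}_2)^m$. The notation $G=(S_1\times\dots\times S_c).O.P$ means $S_1\times\dots\times S_c$ is normal in $G$ and the quotient is an extension of $O$ by $P$. *)

theory Defs
  imports Complex_Main "HOL-Library.Cardinality" "HOL-Algebra.Algebra"
begin

text \<open>A vector of (F_2)^A is a function A => bool; addition is pointwise xor.
  The brick space V_i = (F_2)^m is modelled as 'm => bool (m = CARD('m)),
  and V = V_1 + ... + V_n as ('n \<times> 'm) => bool (n = CARD('n)), the i-th brick
  of v being (\<lambda>j. v (i,j)).\<close>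

definition vadd :: "('a \<Rightarrow> bool) \<Rightarrow> ('a \<Rightarrow> bool) \<Rightarrow> ('a \<Rightarrow> bool)" where
  "vadd x y = (\<lambda>a. x a \<noteq> y a)"

definition vzero :: "'a \<Rightarrow> bool" where
  "vzero = (\<lambda>_. False)"

text \<open>F_2-subspaces (scalar multiplication over F_2 is trivial).\<close>
definition f2_subspace :: "('a \<Rightarrow> bool) set \<Rightarrow> bool" where
  "f2_subspace U \<longleftrightarrow> vzero \<in> U \<and> (\<forall>x\<in>U. \<forall>y\<in>U. vadd x y \<in> U)"

definition f2_dim :: "('a \<Rightarrow> bool) set \<Rightarrow> nat" where
  "f2_dim U = (THE k. card U = 2 ^ k)"

definition f2_linear :: "(('a \<Rightarrow> bool) \<Rightarrow> ('b \<Rightarrow> bool)) \<Rightarrow> bool" where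
  "f2_linear f \<longleftrightarrow> (\<forall>x y. f (vadd x y) = vadd (f x) (f y))"

definition in_GL :: "(('a \<Rightarrow> bool) \<Rightarrow> ('a \<Rightarrow> bool)) \<Rightarrow> bool" where
  "in_GL f \<longleftrightarrow> bij f \<and> f2_linear f"

definition transl :: "('a \<Rightarrow> bool) \<Rightarrow> ('a \<Rightarrow> bool) \<Rightarrow> ('a \<Rightarrow> bool)" where
  "transl v = (\<lambda>x. vadd x v)"

definition transl_group :: "(('a \<Rightarrow> bool) \<Rightarrow> ('a \<Rightarrow> bool)) set" where
  "transl_group = range transl"

definition bricklayer ::
  "('n \<Rightarrow> ('m \<Rightarrow> bool) \<Rightarrow> ('m \<Rightarrow> bool)) \<Rightarrow> (('n \<times> 'm) \<Rightarrow> bool) \<Rightarrow> (('n \<times> 'm) \<Rightarrow> bool)" where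
  "bricklayer g v = (\<lambda>(i, j). g i (\<lambda>j'. v (i, j')) j)"

definition brick_sum :: "'n set \<Rightarrow> (('n \<times> 'm) \<Rightarrow> bool) set" where
  "brick_sum I = {v. \<forall>i j. i \<notin> I \<longrightarrow> \<not> v (i, j)}"

definition wall :: "(('n \<times> 'm) \<Rightarrow> bool) set \<Rightarrow> bool" where
  "wall W \<longleftrightarrow> (\<exists>I. I \<noteq> {} \<and> I \<noteq> UNIV \<and> W = brick_sum I)"

definition proper_mixing :: "((('n \<times> 'm) \<Rightarrow> bool) \<Rightarrow> (('n \<times> 'm) \<Rightarrow> bool)) \<Rightarrow> bool" where
  "proper_mixing lam \<longleftrightarrow> in_GL lam \<and> (\<forall>W. wall W \<longrightarrow> lam ` W \<noteq> W)"

definition strongly_proper_mixing :: "((('n \<times> 'm) \<Rightarrow> bool) \<Rightarrow> (('n \<times> 'm) \<Rightarrow> bool)) \<Rightarrow> bool" where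
  "strongly_proper_mixing lam \<longleftrightarrow> in_GL lam \<and> \<not> (\<exists>W W'. wall W \<and> wall W' \<and> lam ` W = W')"

text \<open>Round function tau_{k,h} = gamma_h lambda_h sigma_{phi(k,h)}, permutations acting on the
  right, i.e. first gamma_h, then lambda_h, then the translation.\<close>
definition round_fun ::
  "('n \<Rightarrow> ('m \<Rightarrow> bool) \<Rightarrow> ('m \<Rightarrow> bool)) \<Rightarrow> ((('n \<times> 'm) \<Rightarrow> bool) \<Rightarrow> (('n \<times> 'm) \<Rightarrow> bool))
    \<Rightarrow> (('n \<times> 'm) \<Rightarrow> bool) \<Rightarrow> (('n \<times> 'm) \<Rightarrow> bool) \<Rightarrow> (('n \<times> 'm) \<Rightarrow> bool)" where
  "round_fun g lam k_h = transl k_h \<circ> lam \<circ> bricklayer g"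

definition proper_round ::
  "(nat \<Rightarrow> ((('n \<times> 'm) \<Rightarrow> bool) \<Rightarrow> (('n \<times> 'm) \<Rightarrow> bool))) \<Rightarrow> ('k \<Rightarrow> nat \<Rightarrow> (('n \<times> 'm) \<Rightarrow> bool))
     \<Rightarrow> nat \<Rightarrow> bool" where
  "proper_round lam phi h \<longleftrightarrow> proper_mixing (lam h) \<and> surj (\<lambda>k. phi k h)"

definition strongly_proper_round ::
  "(nat \<Rightarrow> ((('n \<times> 'm) \<Rightarrow> bool) \<Rightarrow> (('n \<times> 'm) \<Rightarrow> bool))) \<Rightarrow> ('k \<Rightarrow> nat \<Rightarrow> (('n \<times> 'm) \<Rightarrow> bool))
     \<Rightarrow> nat \<Rightarrow> bool" where
  "strongly_proper_round lam phi h \<longleftrightarrow> proper_round lam phi h \<and> strongly_proper_mixing (lam h)"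

definition tb_cipher ::
  "nat \<Rightarrow> (nat \<Rightarrow> 'n \<Rightarrow> ('m \<Rightarrow> bool) \<Rightarrow> ('m \<Rightarrow> bool))
     \<Rightarrow> (nat \<Rightarrow> ((('n \<times> 'm) \<Rightarrow> bool) \<Rightarrow> (('n \<times> 'm) \<Rightarrow> bool)))
     \<Rightarrow> ('k \<Rightarrow> nat \<Rightarrow> (('n \<times> 'm) \<Rightarrow> bool)) \<Rightarrow> bool" where
  "tb_cipher l g lam phi \<longleftrightarrow>
     (\<forall>h\<in>{1..l}. (\<forall>i. bij (g h i)) \<and> bricklayer (g h) vzero = vzero \<and> in_GL (lam h))
     \<and> (\<exists>h\<in>{1..l}. proper_round lam phi h)"

abbreviation SymV :: "('a \<Rightarrow> 'a) monoid" where
  "SymV \<equiv> BijGroup UNIV"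

definition Gamma_h ::
  "(nat \<Rightarrow> 'n \<Rightarrow> ('m \<Rightarrow> bool) \<Rightarrow> ('m \<Rightarrow> bool))
     \<Rightarrow> (nat \<Rightarrow> ((('n \<times> 'm) \<Rightarrow> bool) \<Rightarrow> (('n \<times> 'm) \<Rightarrow> bool)))
     \<Rightarrow> ('k \<Rightarrow> nat \<Rightarrow> (('n \<times> 'm) \<Rightarrow> bool)) \<Rightarrow> nat
     \<Rightarrow> ((('n \<times> 'm) \<Rightarrow> bool) \<Rightarrow> (('n \<times> 'm) \<Rightarrow> bool)) set" where
  "Gamma_h g lam phi h = generate SymV {round_fun (g h) (lam h) (phi k h) | k. True}"

definition deriv_map :: "(('m \<Rightarrow> bool) \<Rightarrow> ('m \<Rightarrow> bool)) \<Rightarrow> ('m \<Rightarrow> bool) \<Rightarrow> ('m \<Rightarrow> bool) \<Rightarrow> ('m \<Rightarrow> bool)" where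
  "deriv_map f u x = vadd (f (vadd x u)) (f x)"

definition diff_uniform :: "nat \<Rightarrow> (('m::finite \<Rightarrow> bool) \<Rightarrow> ('m \<Rightarrow> bool)) \<Rightarrow> bool" where
  "diff_uniform \<delta> f \<longleftrightarrow> (\<forall>u v. u \<noteq> vzero \<longrightarrow> card {x. deriv_map f u x = v} \<le> \<delta>)"

definition weakly_uniform :: "nat \<Rightarrow> (('m::finite \<Rightarrow> bool) \<Rightarrow> ('m \<Rightarrow> bool)) \<Rightarrow> bool" where
  "weakly_uniform \<delta> f \<longleftrightarrow>
     (\<forall>u. u \<noteq> vzero \<longrightarrow> real (card (range (deriv_map f u))) > 2 ^ (CARD('m) - 1) / real \<delta>)"

definition strongly_anti_invariant :: "nat \<Rightarrow> (('m::finite \<Rightarrow> bool) \<Rightarrow> ('m \<Rightarrow> bool)) \<Rightarrow> bool" where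
  "strongly_anti_invariant s f \<longleftrightarrow>
     1 \<le> s \<and> s < CARD('m) \<and>
     (\<forall>U W. f2_subspace U \<longrightarrow> f2_subspace W \<longrightarrow> f ` U = W \<longrightarrow>
        (f2_dim U = f2_dim W \<and> f2_dim W < CARD('m) - s) \<or> (U = UNIV \<and> W = UNIV))"

definition transitive_on_UNIV :: "('a \<Rightarrow> 'a) set \<Rightarrow> bool" where
  "transitive_on_UNIV G \<longleftrightarrow> (\<forall>x y. \<exists>g\<in>G. g x = y)"

definition is_block :: "('a \<Rightarrow> 'a) set \<Rightarrow> 'a set \<Rightarrow> bool" where
  "is_block G B \<longleftrightarrow> B \<noteq> {} \<and> (\<forall>g\<in>G. g ` B = B \<or> g ` B \<inter> B = {})"

definition primitive :: "('a \<Rightarrow> 'a) set \<Rightarrow> bool" where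
  "primitive G \<longleftrightarrow> transitive_on_UNIV G \<and>
     (\<forall>B. is_block G B \<longrightarrow> card B = 1 \<or> B = UNIV)"

definition conj_by :: "('a \<Rightarrow> 'a) \<Rightarrow> ('a \<Rightarrow> 'a) \<Rightarrow> ('a \<Rightarrow> 'a)" where
  "conj_by g x = inv\<^bsub>SymV\<^esub> g \<otimes>\<^bsub>SymV\<^esub> x \<otimes>\<^bsub>SymV\<^esub> g"

text \<open>G = (S_1 x ... x S_c).O.P with T(V) = T_1 x ... x T_c (indices 0..c-1):
  the S_i are subgroups of G forming an internal direct product N, normal in G;
  each S_i is isomorphic to Alt(2^(d/c)) or Sym(2^(d/c)); T_i is an abelian subgroup
  of S_i of order 2^(d/c) and T(V) is their (direct) product; G permutes the S_i by
  conjugation, transitively (so P = G/K, K the kernel of this action, permutes the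
  S_i transitively and they are all conjugate); O = K/N is a subgroup of
  Out(S_1) x ... x Out(S_c), i.e. the natural map K/N -> prod Out(S_i) is injective.\<close>
definition wreath_structure :: "nat \<Rightarrow> ('a \<Rightarrow> 'a) set \<Rightarrow> ('a \<Rightarrow> 'a) set \<Rightarrow> bool" where
  "wreath_structure d Tr G \<longleftrightarrow>
    (\<exists>c S T.
       c > 1 \<and> c dvd d \<and>
       (\<forall>i<c. subgroup (S i) SymV \<and> S i \<subseteq> G) \<and>
       (\<forall>i<c. SymV\<lparr>carrier := S i\<rparr> \<cong> alt_group (2 ^ (d div c))
             \<or> SymV\<lparr>carrier := S i\<rparr> \<cong> sym_group (2 ^ (d div c))) \<and>
       (\<forall>i<c. \<forall>j<c. i \<noteq> j \<longrightarrow> (\<forall>x\<in>S i. \<forall>y\<in>S j. x \<otimes>\<^bsub>SymV\<^esub> y = y \<otimes>\<^bsub>SymV\<^esub> x)) \<and>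
       (\<forall>i<c. S i \<inter> generate SymV (\<Union>j\<in>{..<c} - {i}. S j) = {\<one>\<^bsub>SymV\<^esub>}) \<and>
       generate SymV (\<Union>i<c. S i) \<lhd> SymV\<lparr>carrier := G\<rparr> \<and>
       (\<forall>i<c. subgroup (T i) SymV \<and> T i \<subseteq> S i \<and>
              (\<forall>x\<in>T i. \<forall>y\<in>T i. x \<otimes>\<^bsub>SymV\<^esub> y = y \<otimes>\<^bsub>SymV\<^esub> x) \<and>
              card (T i) = 2 ^ (d div c)) \<and>
       Tr = generate SymV (\<Union>i<c. T i) \<and>
       (\<forall>g\<in>G. \<forall>i<c. \<exists>j<c. conj_by g ` S i = S j) \<and>
       (\<forall>i<c. \<forall>j<c. \<exists>g\<in>G. conj_by g ` S i = S j) \<and>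
       (\<forall>k\<in>G. (\<forall>i<c. conj_by k ` S i = S i) \<longrightarrow>
          (\<forall>i<c. \<exists>s\<in>S i. \<forall>x\<in>S i. conj_by k x = conj_by s x) \<longrightarrow>
          k \<in> generate SymV (\<Union>i<c. S i)))"

end

theory Submission
  imports Defs
begin

text \<open>
  Everything rests on one rigidity property of a strongly proper round. Suppose the round map
  \<open>\<lambda>\<gamma>\<close> sends every coset of a subspace \<open>U\<close> onto a coset of a subspace \<open>W\<close>. On a brick
  \<open>i\<close> where \<open>U\<close> is nonzero, the S-box then sends cosets of the slice \<open>U\<^sub>i\<close> onto cosets of
  \<open>W\<^sub>i\<close>, so each of its derivatives in a nonzero direction of \<open>U\<close> takes at most \<open>|W\<^sub>i|\<close>
  values. Uniformity turns this into \<open>dim U\<^sub>i \<ge> m - r\<close>, and strong anti-invariance (applied to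
  \<open>U\<^sub>i\<close> and, in case (A), to \<open>U\<^sub>i\<close> enlarged by one coset) leaves only \<open>U\<^sub>i = V\<^sub>i\<close>. So
  \<open>U\<close> is a sum of bricks with \<open>\<lambda>(U) = W\<close>, and strong properness rules out proper walls.

  A block of \<open>\<Gamma>\<^sub>h\<close> through \<open>0\<close> is a subspace whose cosets are permuted by the round map,
  which gives primitivity. If \<open>\<Gamma>\<^sub>h = (S\<^sub>1 \<times> \<dots> \<times> S\<^sub>c).O.P\<close>, the orbit of \<open>0\<close> under the
  factors other than \<open>S\<^sub>i\<close> is a nonzero subspace (it is invariant under \<open>T(V) \<le> \<Prod> S\<^sub>j\<close>),
  and since conjugation by the round map permutes the factors, the round map sends cosets of
  one such orbit onto cosets of another; by rigidity every orbit is \<open>V\<close>. Thus \<open>S\<^sub>i\<close>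
  centralizes a transitive group and acts without fixed points. For \<open>d/c \<ge> 2\<close> a 3-cycle of
  \<open>Alt(2^(d/c))\<close> would then force \<open>3 dvd 2^d\<close>; for \<open>d/c = 1\<close> every \<open>S\<^sub>j = T\<^sub>j\<close> consists of
  translations, and a translation in \<open>S\<^sub>1\<close> already lies in the product of the other factors.
\<close>

lemma in_carrier_SymV_iff: "f \<in> carrier SymV \<longleftrightarrow> bij f"
  by (simp add: BijGroup_def Bij_def extensional_def)

lemma SymV_mult_eq_comp: "bij f \<Longrightarrow> bij g \<Longrightarrow> f \<otimes>\<^bsub>SymV\<^esub> g = f \<circ> g"
  unfolding BijGroup_def Bij_def extensional_def compose_def by (auto simp: fun_eq_iff)

lemma SymV_one_eq_id: "\<one>\<^bsub>SymV\<^esub> = id"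
  by (simp add: BijGroup_def fun_eq_iff)

lemma SymV_inv_eq_inv: "bij f \<Longrightarrow> m_inv SymV f = inv' f"
  by (subst inv_BijGroup) (auto simp: Bij_def extensional_def fun_eq_iff)

lemma group_SymV: "group SymV"
  by (rule group_BijGroup)

lemma vadd_comm: "vadd x y = vadd y x"
  by (auto simp: vadd_def fun_eq_iff)

lemma vadd_vzero [simp]: "vadd x vzero = x" "vadd vzero x = x"
  by (auto simp: vadd_def vzero_def fun_eq_iff)

lemma vadd_self [simp]: "vadd x x = vzero"
  by (auto simp: vadd_def vzero_def fun_eq_iff)

lemma vadd_cancel [simp]:
  "vadd (vadd x y) y = x" "vadd x (vadd x y) = y" "vadd (vadd x y) x = y" "vadd y (vadd x y) = x"
  by (auto simp: vadd_def fun_eq_iff)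

lemma vadd_left_cancel [simp]: "vadd x y = vadd x z \<longleftrightarrow> y = z"
  and vadd_right_cancel [simp]: "vadd y x = vadd z x \<longleftrightarrow> y = z"
  by (auto simp: vadd_def fun_eq_iff)

lemma transl_apply: "transl v x = vadd x v"
  by (simp add: transl_def)

lemma transl_vzero [simp]: "transl vzero = id"
  by (simp add: transl_def fun_eq_iff)

lemma transl_transl_apply [simp]: "transl v (transl v x) = x"
  by (simp add: transl_apply)

lemma transl_transl: "transl v \<circ> transl w = transl (vadd v w)"
  by (auto simp: fun_eq_iff transl_def vadd_def)

lemma inj_transl: "inj (transl v)"
  by (auto simp: transl_apply intro: injI)

lemma bij_transl: "bij (transl v)"
  by (rule o_bij[of "transl v"]) (auto simp: fun_eq_iff transl_apply)

lemma transl_image_transl_image [simp]: "transl v ` transl v ` A = A"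
  by (force simp: image_image transl_apply)

lemma card_transl_image: "card (transl v ` A) = card A"
  using inj_transl by (rule card_image[OF inj_on_subset]) simp

lemma transl_eq_id_iff: "transl v = id \<longleftrightarrow> v = vzero"
  by (metis transl_apply transl_vzero id_apply vadd_vzero(2))

section \<open>Subspaces and maps sending cosets to cosets\<close>

lemma f2_subspace_vzero: "f2_subspace U \<Longrightarrow> vzero \<in> U"
  by (simp add: f2_subspace_def)

lemma f2_subspace_vadd: "f2_subspace U \<Longrightarrow> x \<in> U \<Longrightarrow> y \<in> U \<Longrightarrow> vadd x y \<in> U"
  by (simp add: f2_subspace_def)

lemma f2_subspace_card_power_of_support:
  fixes U :: "('a::finite \<Rightarrow> bool) set"
  assumes "finite A" "f2_subspace U" "\<forall>x\<in>U. \<forall>b. b \<notin> A \<longrightarrow> \<not> x b"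
  shows "\<exists>k. card U = 2 ^ k"
  using assms
proof (induction A arbitrary: U rule: finite_induct)
  case empty
  then have "U = {vzero}"
    using f2_subspace_vzero[OF empty(1)] by (auto simp: vzero_def fun_eq_iff)
  then show ?case by (intro exI[of _ 0]) simp
next
  case (insert a A)
  define U0 where "U0 = {x\<in>U. \<not> x a}"
  have "f2_subspace U0"
    using insert.prems(1) by (auto simp: U0_def f2_subspace_def vzero_def vadd_def)
  moreover have "\<forall>x\<in>U0. \<forall>b. b \<notin> A \<longrightarrow> \<not> x b"
    using insert.prems(2) by (auto simp: U0_def)
  ultimately obtain k where k: "card U0 = 2 ^ k"
    using insert.IH by blast
  show ?case
  proof (cases "\<exists>w\<in>U. w a")
    case False
    then have "U = U0" by (auto simp: U0_def)
    then show ?thesis using k by blast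
  next
    case True
    then obtain w where w: "w \<in> U" "w a" by blast
    have "U = U0 \<union> transl w ` U0"
    proof (intro equalityI subsetI)
      fix x assume x: "x \<in> U"
      show "x \<in> U0 \<union> transl w ` U0"
      proof (cases "x a")
        case True
        then have "vadd x w \<in> U0"
          using x w insert.prems(1) by (auto simp: U0_def vadd_def f2_subspace_def)
        then show ?thesis by (intro UnI2 image_eqI[of _ _ "vadd x w"]) (auto simp: transl_apply)
      qed (use x in \<open>auto simp: U0_def\<close>)
    qed (use w insert.prems(1) in \<open>auto simp: U0_def f2_subspace_def transl_apply\<close>)
    moreover have "U0 \<inter> transl w ` U0 = {}"
      using w by (auto simp: U0_def vadd_def transl_apply)
    ultimately have "card U = card U0 + card (transl w ` U0)"
      by (simp add: card_Un_disjoint)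
    then have "card U = 2 ^ Suc k"
      using k by (simp add: card_transl_image)
    then show ?thesis by blast
  qed
qed

lemma f2_subspace_card_power:
  fixes U :: "('a::finite \<Rightarrow> bool) set"
  assumes "f2_subspace U" shows "\<exists>k. card U = 2 ^ k"
  using f2_subspace_card_power_of_support[of UNIV U] assms by simp

lemma f2_dim_eqI: "card U = 2 ^ k \<Longrightarrow> f2_dim U = k"
  unfolding f2_dim_def by (rule the_equality) auto

lemma f2_subspace_Un_transl_image:
  assumes "f2_subspace U" shows "f2_subspace (U \<union> transl c ` U)"
  unfolding f2_subspace_def
proof (intro conjI ballI)
  show "vzero \<in> U \<union> transl c ` U"
    using f2_subspace_vzero[OF assms] by simp
  have shift: "vadd (vadd x c) y = vadd (vadd x y) c" "vadd x (vadd y c) = vadd (vadd x y) c"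
    "vadd (vadd x c) (vadd y c) = vadd x y" for x y
    by (auto simp: vadd_def)
  fix x y assume "x \<in> U \<union> transl c ` U" "y \<in> U \<union> transl c ` U"
  then show "vadd x y \<in> U \<union> transl c ` U"
    using f2_subspace_vadd[OF assms] by (auto simp: transl_apply shift)
qed

lemma card_Un_transl_image:
  fixes U :: "('a::finite \<Rightarrow> bool) set"
  assumes "f2_subspace U" "c \<notin> U"
  shows "card (U \<union> transl c ` U) = 2 * card U"
proof -
  have "U \<inter> transl c ` U = {}"
  proof (rule ccontr)
    assume "U \<inter> transl c ` U \<noteq> {}"
    then obtain y where "y \<in> U" "vadd y c \<in> U" by (auto simp: transl_apply)
    then have "vadd y (vadd y c) \<in> U" using f2_subspace_vadd[OF assms(1)] by blast
    then show False using assms(2) by simp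
  qed
  then show ?thesis by (simp add: card_Un_disjoint card_transl_image)
qed

definition maps_cosets ::
  "(('a \<Rightarrow> bool) \<Rightarrow> ('b \<Rightarrow> bool)) \<Rightarrow> ('a \<Rightarrow> bool) set \<Rightarrow> ('b \<Rightarrow> bool) set \<Rightarrow> bool" where
  "maps_cosets f U W \<longleftrightarrow> (\<forall>v. f ` transl v ` U = transl (f v) ` W)"

lemma maps_cosets_image:
  "maps_cosets f U W \<Longrightarrow> f vzero = vzero \<Longrightarrow> f ` U = W"
  unfolding maps_cosets_def by (drule spec[of _ vzero]) simp

lemma maps_cosets_deriv_mem:
  assumes "maps_cosets f U W" "u \<in> U"
  shows "vadd (f (vadd u v)) (f v) \<in> W"
proof -
  have "f (vadd u v) \<in> transl (f v) ` W"
    using assms unfolding maps_cosets_def by (metis image_eqI transl_apply)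
  then show ?thesis by (auto simp: transl_apply)
qed

lemma maps_cosets_image_Un_transl_image:
  "maps_cosets f U W \<Longrightarrow> f vzero = vzero \<Longrightarrow> f ` (U \<union> transl c ` U) = W \<union> transl (f c) ` W"
  by (simp add: image_Un maps_cosets_image) (simp add: maps_cosets_def)

text \<open>Conditions (A) and (B) for a single brick. The bounds on \<open>r\<close> are implied, since
  \<open>strongly_anti_invariant s\<close> requires \<open>1 \<le> s < m\<close>.\<close>

definition uniform_anti_invariant :: "nat \<Rightarrow> (('m::finite \<Rightarrow> bool) \<Rightarrow> ('m \<Rightarrow> bool)) \<Rightarrow> bool" where
  "uniform_anti_invariant r f \<longleftrightarrow>
     (diff_uniform (2 ^ r) f \<and> strongly_anti_invariant (r - 1) f)
     \<or> (weakly_uniform (2 ^ r) f \<and> strongly_anti_invariant r f)"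

lemma card_UNIV_vec: "card (UNIV :: ('m::finite \<Rightarrow> bool) set) = 2 ^ CARD('m)"
  by (simp add: card_fun)

lemma card_UNIV_le_card_range_mult:
  fixes F :: "('m::finite \<Rightarrow> bool) \<Rightarrow> 'b"
  assumes "\<And>y. card {x. F x = y} \<le> K"
  shows "2 ^ CARD('m) \<le> card (range F) * K"
proof -
  have "card (UNIV :: ('m \<Rightarrow> bool) set) = card (\<Union>y\<in>range F. {x. F x = y})"
    by (rule arg_cong[of _ _ card]) blast
  also have "\<dots> \<le> (\<Sum>y\<in>range F. card {x. F x = y})"
    by (rule card_UN_le) simp
  also have "\<dots> \<le> card (range F) * K"
    using sum_bounded_above[of "range F" "\<lambda>y. card {x. F x = y}" K] assms by simp
  finally show ?thesis by (simp add: card_UNIV_vec)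
qed

lemma uniform_anti_invariant_dim_bound:
  fixes f :: "('m::finite \<Rightarrow> bool) \<Rightarrow> ('m \<Rightarrow> bool)"
  assumes "uniform_anti_invariant r f" "u \<noteq> vzero" "card (range (deriv_map f u)) \<le> 2 ^ k"
  shows "CARD('m) \<le> k + r"
  using assms(1) unfolding uniform_anti_invariant_def
proof (elim disjE conjE)
  assume "diff_uniform (2 ^ r) f"
  then have "2 ^ CARD('m) \<le> card (range (deriv_map f u)) * 2 ^ r"
    using assms(2) by (intro card_UNIV_le_card_range_mult) (simp add: diff_uniform_def)
  also have "\<dots> \<le> 2 ^ (k + r)"
    using assms(3) by (simp add: power_add)
  finally show ?thesis by simp
next
  assume "weakly_uniform (2 ^ r) f" "strongly_anti_invariant r f"
  then have "2 ^ (CARD('m) - 1) / 2 ^ r < real (card (range (deriv_map f u)))"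
    using assms(2) by (simp add: weakly_uniform_def)
  also have "\<dots> \<le> 2 ^ k"
    using assms(3) by (metis of_nat_le_iff of_nat_numeral of_nat_power)
  finally have "(2::real) ^ (CARD('m) - 1) < 2 ^ (k + r)"
    by (simp add: divide_less_eq power_add)
  then have "CARD('m) - 1 < k + r"
    by (simp only: power_strict_increasing_iff[of 2])
  moreover have "1 \<le> r"
    using \<open>strongly_anti_invariant r f\<close> by (simp add: strongly_anti_invariant_def)
  ultimately show ?thesis by linarith
qed

lemma strongly_anti_invariant_dim_less:
  fixes f :: "('m::finite \<Rightarrow> bool) \<Rightarrow> ('m \<Rightarrow> bool)"
  assumes "strongly_anti_invariant s f" "f2_subspace U" "f2_subspace (f ` U)"
    and "card U = 2 ^ k" "card (f ` U) = 2 ^ k" "U \<noteq> UNIV"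
  shows "k < CARD('m) - s"
proof -
  have "f2_dim U = k" "f2_dim (f ` U) = k"
    using assms(4,5) by (simp_all add: f2_dim_eqI)
  with assms(1-3,6) show ?thesis
    unfolding strongly_anti_invariant_def by metis
qed

lemma strongly_anti_invariant_coset_extension:
  fixes f :: "('m::finite \<Rightarrow> bool) \<Rightarrow> ('m \<Rightarrow> bool)"
  assumes sai: "strongly_anti_invariant s f" and f: "inj f" "f vzero = vzero"
    and UW: "f2_subspace U" "f2_subspace W" "maps_cosets f U W"
    and k: "card U = 2 ^ k" "CARD('m) \<le> Suc k + s" and c: "c \<notin> U"
  shows "Suc k = CARD('m)"
proof -
  define U' where "U' = U \<union> transl c ` U"
  have U': "f2_subspace U'" "card U' = 2 ^ Suc k"
    using UW(1) c k(1) by (simp_all add: U'_def f2_subspace_Un_transl_image card_Un_transl_image)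
  have "f ` U' = W \<union> transl (f c) ` W"
    unfolding U'_def using UW(3) f(2) by (rule maps_cosets_image_Un_transl_image)
  then have fU': "f2_subspace (f ` U')"
    using UW(2) by (simp add: f2_subspace_Un_transl_image)
  have fU'_card: "card (f ` U') = 2 ^ Suc k"
    using U'(2) f(1) by (simp add: card_image inj_on_subset)
  show ?thesis
  proof (cases "U' = UNIV")
    case True
    then have "(2::nat) ^ Suc k = 2 ^ CARD('m)"
      using U'(2) card_UNIV_vec by metis
    then show ?thesis
      by (simp only: power_inject_exp[of 2])
  next
    case False
    then have "Suc k < CARD('m) - s"
      using sai U' fU' fU'_card by (intro strongly_anti_invariant_dim_less) auto
    then show ?thesis using k(2) by linarith
  qed
qed

lemma maps_cosets_subspace_eq_UNIV:
  fixes f :: "('m::finite \<Rightarrow> bool) \<Rightarrow> ('m \<Rightarrow> bool)"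
  assumes f: "inj f" "f vzero = vzero" "uniform_anti_invariant r f"
    and UW: "f2_subspace U" "f2_subspace W" "maps_cosets f U W"
    and deriv: "u \<noteq> vzero" "card (range (deriv_map f u)) \<le> card W"
  shows "U = UNIV"
proof (rule ccontr)
  assume U_proper: "U \<noteq> UNIV"
  have fU: "f ` U = W"
    using UW(3) f(2) by (rule maps_cosets_image)
  obtain k where k: "card U = 2 ^ k"
    using f2_subspace_card_power[OF UW(1)] by blast
  have fU_card: "card (f ` U) = 2 ^ k"
    using k f(1) by (simp add: card_image inj_on_subset)
  have dim_bound: "CARD('m) \<le> k + r"
    using f(3) deriv fU fU_card by (intro uniform_anti_invariant_dim_bound) auto
  from f(3) show False
    unfolding uniform_anti_invariant_def
  proof (elim disjE conjE)
    assume "strongly_anti_invariant r f"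
    then have "k < CARD('m) - r"
      using UW(1,2) fU k fU_card U_proper by (intro strongly_anti_invariant_dim_less) auto
    then show False using dim_bound by linarith
  next
    txt \<open>Here \<open>dim U = m - r\<close>; adjoining one coset gives dimension \<open>m - r + 1\<close>, which
      anti-invariance allows only for the whole space.\<close>
    assume sai: "strongly_anti_invariant (r - 1) f"
    then have r: "2 \<le> r"
      unfolding strongly_anti_invariant_def by linarith
    have "k < CARD('m) - (r - 1)"
      using sai UW(1,2) fU k fU_card U_proper by (intro strongly_anti_invariant_dim_less) auto
    moreover obtain c where "c \<notin> U"
      using U_proper by blast
    then have "Suc k = CARD('m)"
      using sai f(1,2) UW k dim_bound r
      by (intro strongly_anti_invariant_coset_extension[where s = "r - 1"]) auto
    ultimately show False using r by linarith
  qed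
qed

definition brick :: "('n \<times> 'm \<Rightarrow> bool) \<Rightarrow> 'n \<Rightarrow> ('m \<Rightarrow> bool)" where
  "brick v i = (\<lambda>j. v (i, j))"

definition brick_emb :: "'n \<Rightarrow> ('m \<Rightarrow> bool) \<Rightarrow> ('n \<times> 'm \<Rightarrow> bool)" where
  "brick_emb i x = (\<lambda>(k, j). k = i \<and> x j)"

definition brick_slice :: "'n \<Rightarrow> ('n \<times> 'm \<Rightarrow> bool) set \<Rightarrow> ('m \<Rightarrow> bool) set" where
  "brick_slice i U = {x. brick_emb i x \<in> U}"

lemma brick_eqI: "(\<And>i. brick u i = brick v i) \<Longrightarrow> u = v"
  by (auto simp: brick_def fun_eq_iff)

lemma brick_bricklayer [simp]: "brick (bricklayer G v) i = G i (brick v i)"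
  by (simp add: brick_def bricklayer_def)

lemma brick_vadd [simp]: "brick (vadd u v) i = vadd (brick u i) (brick v i)"
  by (simp add: brick_def vadd_def)

lemma brick_vzero [simp]: "brick vzero i = vzero"
  by (simp add: brick_def vzero_def)

lemma brick_brick_emb [simp]: "brick (brick_emb i x) k = (if k = i then x else vzero)"
  by (auto simp: brick_def brick_emb_def vzero_def fun_eq_iff)

lemma brick_emb_vadd: "brick_emb i (vadd x y) = vadd (brick_emb i x) (brick_emb i y)"
  by (rule brick_eqI) simp

lemma brick_emb_vzero [simp]: "brick_emb i vzero = vzero"
  by (rule brick_eqI) simp

lemma brick_sum_UNIV [simp]: "brick_sum UNIV = UNIV"
  by (simp add: brick_sum_def)

lemma brick_sum_empty [simp]: "brick_sum {} = {vzero}"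
  by (auto simp: brick_sum_def vzero_def fun_eq_iff)

lemma brick_sum_eq_UNIV_iff: "brick_sum I = (UNIV :: ('n \<times> 'm \<Rightarrow> bool) set) \<longleftrightarrow> I = UNIV"
proof
  assume "brick_sum I = (UNIV :: ('n \<times> 'm \<Rightarrow> bool) set)"
  then have "(\<lambda>_. True) \<in> (brick_sum I :: ('n \<times> 'm \<Rightarrow> bool) set)"
    by simp
  then show "I = UNIV"
    by (auto simp: brick_sum_def)
qed simp

lemma eq_brick_emb_brickI: "(\<And>k. k \<noteq> i \<Longrightarrow> brick v k = vzero) \<Longrightarrow> v = brick_emb i (brick v i)"
  by (rule brick_eqI) simp

lemma bricklayer_brick_emb:
  "\<forall>k. G k vzero = vzero \<Longrightarrow> bricklayer G (brick_emb i x) = brick_emb i (G i x)"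
  by (rule brick_eqI) simp

lemma bricklayer_vzero: "\<forall>k. G k vzero = vzero \<Longrightarrow> bricklayer G vzero = vzero"
  by (rule brick_eqI) simp

lemma bricklayer_vzero_imp_brick_vzero: "bricklayer G vzero = vzero \<Longrightarrow> G k vzero = vzero"
  by (metis brick_bricklayer brick_vzero)

lemma bij_bricklayer:
  assumes "\<forall>k. bij (G k)" shows "bij (bricklayer G)"
proof (rule o_bij[of "bricklayer (\<lambda>k. inv' (G k))"])
  show "bricklayer (\<lambda>k. inv' (G k)) \<circ> bricklayer G = id"
    by (rule ext, rule brick_eqI) (use assms in \<open>auto simp: bij_def\<close>)
  show "bricklayer G \<circ> bricklayer (\<lambda>k. inv' (G k)) = id"
    by (rule ext, rule brick_eqI) (use assms in \<open>auto simp: bij_def surj_f_inv_f\<close>)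
qed

lemma bricklayer_image_brick_sum:
  fixes G :: "'n \<Rightarrow> ('m \<Rightarrow> bool) \<Rightarrow> ('m \<Rightarrow> bool)"
  assumes "\<forall>k. bij (G k)" "\<forall>k. G k vzero = vzero"
  shows "bricklayer G ` brick_sum I = brick_sum I"
proof -
  have brick_sum_iff: "v \<in> brick_sum I \<longleftrightarrow> (\<forall>i. i \<notin> I \<longrightarrow> brick v i = vzero)" for v
    by (auto simp: brick_sum_def brick_def vzero_def fun_eq_iff)
  have "G i x = vzero \<longleftrightarrow> x = vzero" for i x
    using assms by (metis bij_def inj_eq)
  then have mem_iff: "bricklayer G v \<in> brick_sum I \<longleftrightarrow> v \<in> brick_sum I" for v
    by (simp add: brick_sum_iff)
  show ?thesis
  proof (intro equalityI subsetI)
    fix v :: "'n \<times> 'm \<Rightarrow> bool" assume "v \<in> brick_sum I"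
    moreover obtain w where "v = bricklayer G w"
      using bij_bricklayer[OF assms(1)] by (metis bij_pointE)
    ultimately show "v \<in> bricklayer G ` brick_sum I"
      using mem_iff by blast
  qed (use mem_iff in blast)
qed

lemma f2_subspace_brick_slice: "f2_subspace U \<Longrightarrow> f2_subspace (brick_slice i U)"
  by (simp add: f2_subspace_def brick_slice_def brick_emb_vadd)

lemma maps_cosets_brick_slice:
  assumes bij: "\<forall>k. bij (G k)" and zero: "\<forall>k. G k vzero = vzero"
    and cosets: "maps_cosets (bricklayer G) U W"
  shows "maps_cosets (G i) (brick_slice i U) (brick_slice i W)"
  unfolding maps_cosets_def
proof (intro allI equalityI subsetI)
  fix v y
  assume "y \<in> G i ` transl v ` brick_slice i U"
  then obtain x where x: "brick_emb i x \<in> U" "y = G i (vadd x v)"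
    by (auto simp: brick_slice_def transl_apply)
  have "vadd (bricklayer G (vadd (brick_emb i x) (brick_emb i v))) (bricklayer G (brick_emb i v)) \<in> W"
    using cosets x(1) by (rule maps_cosets_deriv_mem)
  then have "vadd y (G i v) \<in> brick_slice i W"
    using x(2) zero by (simp add: brick_slice_def bricklayer_brick_emb brick_emb_vadd[symmetric])
  then show "y \<in> transl (G i v) ` brick_slice i W"
    by (intro image_eqI[of _ _ "vadd y (G i v)"]) (simp_all add: transl_apply)
next
  fix v y
  assume "y \<in> transl (G i v) ` brick_slice i W"
  then obtain x where x: "brick_emb i x \<in> W" "y = vadd x (G i v)"
    by (auto simp: brick_slice_def transl_apply)
  then have "brick_emb i y \<in> transl (bricklayer G (brick_emb i v)) ` W"
    using zero by (simp add: transl_apply bricklayer_brick_emb brick_emb_vadd)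
  then have "brick_emb i y \<in> bricklayer G ` transl (brick_emb i v) ` U"
    using cosets by (simp add: maps_cosets_def)
  then obtain u where u: "u \<in> U" "bricklayer G (vadd u (brick_emb i v)) = brick_emb i y"
    by (auto simp: transl_apply)
  have "G k (brick u k) = vzero" if "k \<noteq> i" for k
    using arg_cong[OF u(2), of "\<lambda>w. brick w k"] that zero by simp
  then have "brick u k = vzero" if "k \<noteq> i" for k
    using that bij zero by (metis bij_pointE)
  then have "u = brick_emb i (brick u i)"
    by (rule eq_brick_emb_brickI)
  then have "brick u i \<in> brick_slice i U"
    using u(1) by (metis brick_slice_def mem_Collect_eq)
  moreover have "G i (vadd (brick u i) v) = y"
    using arg_cong[OF u(2), of "\<lambda>w. brick w i"] zero by simp
  ultimately show "y \<in> G i ` transl v ` brick_slice i U"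
    by (auto simp: transl_apply)
qed

lemma card_range_deriv_le_card_brick_slice:
  fixes G :: "'n \<Rightarrow> ('m::finite \<Rightarrow> bool) \<Rightarrow> ('m \<Rightarrow> bool)"
  assumes zero: "\<forall>k. G k vzero = vzero" and W: "f2_subspace W"
    and cosets: "maps_cosets (bricklayer G) U W" and u: "u \<in> U"
  shows "card (range (deriv_map (G i) (brick u i))) \<le> card (brick_slice i W)"
proof -
  let ?F = "deriv_map (G i) (brick u i)"
  let ?D = "\<lambda>w. vadd (bricklayer G (vadd u w)) (bricklayer G w)"
  have "vadd (?F x) (?F vzero) \<in> brick_slice i W" for x
  proof -
    have "?D (brick_emb i x) \<in> W" "?D vzero \<in> W"
      using cosets u by (rule maps_cosets_deriv_mem)+
    then have "vadd (?D (brick_emb i x)) (?D vzero) \<in> W"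
      by (rule f2_subspace_vadd[OF W])
    moreover have "vadd (?D (brick_emb i x)) (?D vzero) = brick_emb i (vadd (?F x) (?F vzero))"
      (is "?lhs = ?rhs")
    proof (rule brick_eqI)
      fix k
      show "brick ?lhs k = brick ?rhs k"
        using zero by (cases "k = i") (simp_all add: deriv_map_def vadd_comm[of x])
    qed
    ultimately show ?thesis by (simp add: brick_slice_def)
  qed
  then have "range ?F \<subseteq> transl (?F vzero) ` brick_slice i W"
    by (auto simp: transl_apply intro!: image_eqI[of _ _ "vadd (?F _) (?F vzero)"])
  then show ?thesis
    using card_mono[of "transl (?F vzero) ` brick_slice i W"] by (simp add: card_transl_image)
qed

lemma brick_sum_subset_f2_subspace:
  fixes U :: "('n::finite \<times> 'm \<Rightarrow> bool) set"
  assumes U: "f2_subspace U" and slices: "\<forall>i\<in>I. \<forall>x. brick_emb i x \<in> U"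
  shows "brick_sum I \<subseteq> U"
proof
  fix v :: "'n \<times> 'm \<Rightarrow> bool" assume v: "v \<in> brick_sum I"
  define restr where "restr J = (\<lambda>(i, j). i \<in> J \<and> v (i, j))" for J
  have "finite J \<Longrightarrow> J \<subseteq> I \<Longrightarrow> restr J \<in> U" for J
  proof (induction J rule: finite_induct)
    case empty
    then show ?case using f2_subspace_vzero[OF U] by (simp add: restr_def vzero_def)
  next
    case (insert i J)
    then have "restr (insert i J) = vadd (restr J) (brick_emb i (brick v i))"
      by (auto simp: restr_def vadd_def brick_emb_def brick_def fun_eq_iff)
    then show ?case
      using insert slices f2_subspace_vadd[OF U] by auto
  qed
  then have "restr I \<in> U" by simp
  moreover have "restr I = v" using v by (auto simp: restr_def brick_sum_def fun_eq_iff)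
  ultimately show "v \<in> U" by simp
qed

theorem maps_cosets_bricklayer_brick_sum:
  fixes G :: "'n::finite \<Rightarrow> ('m::finite \<Rightarrow> bool) \<Rightarrow> ('m \<Rightarrow> bool)"
  assumes bij: "\<forall>k. bij (G k)" and zero: "\<forall>k. G k vzero = vzero"
    and bricks: "\<forall>k. uniform_anti_invariant r (G k)"
    and U: "f2_subspace U" and W: "f2_subspace W" and cosets: "maps_cosets (bricklayer G) U W"
  shows "U = brick_sum {i. \<exists>u\<in>U. brick u i \<noteq> vzero}"
proof
  show "U \<subseteq> brick_sum {i. \<exists>u\<in>U. brick u i \<noteq> vzero}"
    by (auto simp: brick_sum_def brick_def vzero_def fun_eq_iff)
  have "brick_slice i U = UNIV" if u: "u \<in> U" "brick u i \<noteq> vzero" for i u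
  proof (rule maps_cosets_subspace_eq_UNIV)
    show "inj (G i)"
      using bij bij_is_inj by blast
    show "G i vzero = vzero" "uniform_anti_invariant r (G i)"
      using zero bricks by blast+
    show "f2_subspace (brick_slice i U)" "f2_subspace (brick_slice i W)"
      using U W by (simp_all add: f2_subspace_brick_slice)
    show "maps_cosets (G i) (brick_slice i U) (brick_slice i W)"
      using bij zero cosets by (rule maps_cosets_brick_slice)
    show "card (range (deriv_map (G i) (brick u i))) \<le> card (brick_slice i W)"
      using zero W cosets u(1) by (rule card_range_deriv_le_card_brick_slice)
  qed (rule u(2))
  then show "brick_sum {i. \<exists>u\<in>U. brick u i \<noteq> vzero} \<subseteq> U"
    using U by (intro brick_sum_subset_f2_subspace) (auto simp: brick_slice_def)
qed

section \<open>The round group and its primitivity\<close>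

lemma f2_linear_vzero: "f2_linear l \<Longrightarrow> l vzero = vzero"
  unfolding f2_linear_def by (metis vadd_self)

lemma f2_subspace_vimage_linear: "f2_linear l \<Longrightarrow> f2_subspace W \<Longrightarrow> f2_subspace (l -` W)"
  by (simp add: f2_subspace_def f2_linear_vzero) (simp add: f2_linear_def)

lemma f2_linear_image_transl_image:
  "f2_linear l \<Longrightarrow> l ` transl c ` A = transl (l c) ` l ` A"
  by (simp add: image_image transl_apply f2_linear_def)

lemma maps_cosets_linear_comp:
  assumes l: "bij l" "f2_linear l" and cosets: "maps_cosets (l \<circ> f) U W"
  shows "maps_cosets f U (l -` W)"
  unfolding maps_cosets_def
proof
  fix v
  have "l ` f ` transl v ` U = transl (l (f v)) ` W"
    using cosets by (simp add: maps_cosets_def image_comp)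
  also have "\<dots> = l ` transl (f v) ` (l -` W)"
    using l by (simp add: f2_linear_image_transl_image bij_is_surj surj_image_vimage_eq)
  finally show "f ` transl v ` U = transl (f v) ` (l -` W)"
    using l(1) by (simp add: bij_is_inj inj_image_eq_iff)
qed

lemma maps_cosets_mixing_bricklayer_brick_sum:
  fixes G :: "'n::finite \<Rightarrow> ('m::finite \<Rightarrow> bool) \<Rightarrow> ('m \<Rightarrow> bool)"
  assumes bij: "\<forall>k. bij (G k)" and zero: "\<forall>k. G k vzero = vzero"
    and bricks: "\<forall>k. uniform_anti_invariant r (G k)"
    and l: "bij l" "f2_linear l"
    and U: "f2_subspace U" and W: "f2_subspace W" and cosets: "maps_cosets (l \<circ> bricklayer G) U W"
  shows "\<exists>I. U = brick_sum I \<and> l ` U = W"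
proof -
  have cosets': "maps_cosets (bricklayer G) U (l -` W)"
    using l cosets by (rule maps_cosets_linear_comp)
  define I where "I = {i. \<exists>u\<in>U. brick u i \<noteq> vzero}"
  have U_eq: "U = brick_sum I"
    unfolding I_def using bij zero bricks U f2_subspace_vimage_linear[OF l(2) W] cosets'
    by (rule maps_cosets_bricklayer_brick_sum)
  have "l -` W = bricklayer G ` U"
    using cosets' bricklayer_vzero[of G, OF zero] by (simp add: maps_cosets_image)
  also have "\<dots> = U"
    unfolding U_eq using bij zero by (rule bricklayer_image_brick_sum)
  finally have "l ` U = W"
    using l(1) by (metis bij_is_surj surj_image_vimage_eq)
  with U_eq show ?thesis by blast
qed

lemma strongly_proper_mixing_image_brick_sum:
  fixes l :: "('n \<times> 'm \<Rightarrow> bool) \<Rightarrow> ('n \<times> 'm \<Rightarrow> bool)"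
  assumes l: "strongly_proper_mixing l" and img: "l ` brick_sum I = brick_sum J"
    and "I \<noteq> {}" "J \<noteq> {}"
  shows "I = UNIV"
proof (cases "J = UNIV")
  case True
  have "bij l"
    using l by (simp add: strongly_proper_mixing_def in_GL_def)
  then have "l ` brick_sum I = l ` UNIV"
    using img True by (simp add: bij_is_surj)
  then have "brick_sum I = (UNIV :: ('n \<times> 'm \<Rightarrow> bool) set)"
    using \<open>bij l\<close> by (simp add: bij_is_inj inj_image_eq_iff)
  then show ?thesis
    by (simp add: brick_sum_eq_UNIV_iff)
next
  case False
  then have "\<not> wall (brick_sum I :: ('n \<times> 'm \<Rightarrow> bool) set)"
    using l img \<open>J \<noteq> {}\<close> unfolding strongly_proper_mixing_def wall_def by blast
  then show "I = UNIV"
    using \<open>I \<noteq> {}\<close> unfolding wall_def by blast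
qed

lemma is_block_image_eq:
  "is_block G B \<Longrightarrow> g \<in> G \<Longrightarrow> x \<in> B \<Longrightarrow> g x \<in> B \<Longrightarrow> g ` B = B"
  unfolding is_block_def by blast

locale strong_round =
  fixes g :: "nat \<Rightarrow> 'n::finite \<Rightarrow> ('m::finite \<Rightarrow> bool) \<Rightarrow> ('m \<Rightarrow> bool)"
    and lam :: "nat \<Rightarrow> ((('n \<times> 'm) \<Rightarrow> bool) \<Rightarrow> (('n \<times> 'm) \<Rightarrow> bool))"
    and phi :: "'k \<Rightarrow> nat \<Rightarrow> (('n \<times> 'm) \<Rightarrow> bool)"
    and h r :: nat
  assumes bricks_bij: "\<forall>i. bij (g h i)" and bricks_vzero: "\<forall>i. g h i vzero = vzero"
    and lam_GL: "in_GL (lam h)" and phi_surj: "surj (\<lambda>k. phi k h)"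
    and lam_strongly_proper: "strongly_proper_mixing (lam h)"
    and bricks_uniform_anti_invariant: "\<forall>i. uniform_anti_invariant r (g h i)"
begin

abbreviation \<Gamma> where "\<Gamma> \<equiv> Gamma_h g lam phi h"

definition round_map where "round_map = lam h \<circ> bricklayer (g h)"

lemma bij_round_map: "bij round_map"
  using lam_GL bij_bricklayer[OF bricks_bij] unfolding round_map_def in_GL_def
  by (blast intro: bij_comp)

lemma round_fun_eq: "round_fun (g h) (lam h) (phi k h) = transl (phi k h) \<circ> round_map"
  by (simp add: round_fun_def round_map_def comp_assoc)

lemma subgroup_Gamma: "subgroup \<Gamma> SymV"
  unfolding Gamma_h_def
proof (rule group.generate_is_subgroup[OF group_SymV])
  show "{round_fun (g h) (lam h) (phi k h) | k. True} \<subseteq> carrier SymV"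
    using bij_round_map bij_transl by (auto simp: round_fun_eq in_carrier_SymV_iff intro!: bij_comp)
qed

lemma Gamma_bij: "f \<in> \<Gamma> \<Longrightarrow> bij f"
  using subgroup.subset[OF subgroup_Gamma] in_carrier_SymV_iff by blast

lemma Gamma_comp_closed: "f \<in> \<Gamma> \<Longrightarrow> f' \<in> \<Gamma> \<Longrightarrow> f \<circ> f' \<in> \<Gamma>"
  using subgroup.m_closed[OF subgroup_Gamma] SymV_mult_eq_comp Gamma_bij by metis

lemma Gamma_inv_closed: "f \<in> \<Gamma> \<Longrightarrow> inv' f \<in> \<Gamma>"
  using subgroup.m_inv_closed[OF subgroup_Gamma] SymV_inv_eq_inv Gamma_bij by metis

lemma transl_round_map_in_Gamma: "transl (phi k h) \<circ> round_map \<in> \<Gamma>"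
  unfolding Gamma_h_def round_fun_eq[symmetric] by (rule generate.incl) blast

lemma round_map_in_Gamma: "round_map \<in> \<Gamma>"
proof -
  obtain k where "phi k h = vzero"
    using phi_surj by (metis surjD)
  then show ?thesis
    using transl_round_map_in_Gamma[of k] by simp
qed

lemma transl_in_Gamma: "transl v \<in> \<Gamma>"
proof -
  obtain k where "phi k h = v"
    using phi_surj by (metis surjD)
  then have "(transl v \<circ> round_map) \<circ> inv' round_map \<in> \<Gamma>"
    using transl_round_map_in_Gamma Gamma_inv_closed[OF round_map_in_Gamma] Gamma_comp_closed
    by blast
  moreover have "round_map \<circ> inv' round_map = id"
    using bij_round_map bij_is_surj surj_iff by blast
  ultimately show ?thesis
    by (simp add: comp_assoc)
qed

lemma round_map_cosets_brick_sum:
  "f2_subspace U \<Longrightarrow> f2_subspace W \<Longrightarrow> maps_cosets round_map U W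
    \<Longrightarrow> \<exists>I. U = brick_sum I \<and> lam h ` U = W"
  unfolding round_map_def using bricks_bij bricks_vzero bricks_uniform_anti_invariant lam_GL
  by (intro maps_cosets_mixing_bricklayer_brick_sum) (auto simp: in_GL_def)

lemma is_block_transl_image:
  assumes "is_block \<Gamma> B" shows "is_block \<Gamma> (transl b ` B)"
  unfolding is_block_def
proof (intro conjI ballI)
  show "transl b ` B \<noteq> {}"
    using assms by (simp add: is_block_def)
  fix f assume "f \<in> \<Gamma>"
  then have "transl b \<circ> f \<circ> transl b \<in> \<Gamma>"
    using transl_in_Gamma Gamma_comp_closed by blast
  then have "(transl b \<circ> f \<circ> transl b) ` B = B \<or> (transl b \<circ> f \<circ> transl b) ` B \<inter> B = {}"
    using assms unfolding is_block_def by blast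
  moreover have "f ` transl b ` B = transl b ` (transl b \<circ> f \<circ> transl b) ` B"
    by (simp add: image_comp)
  ultimately show "f ` transl b ` B = transl b ` B \<or> f ` transl b ` B \<inter> transl b ` B = {}"
    by (auto simp: image_Int[OF inj_transl, symmetric])
qed

lemma is_block_vzero_f2_subspace:
  assumes U: "is_block \<Gamma> U" "vzero \<in> U" shows "f2_subspace U"
  unfolding f2_subspace_def
proof (intro conjI ballI)
  fix x y assume "x \<in> U" "y \<in> U"
  then have "transl x ` U = U"
    using U transl_in_Gamma by (intro is_block_image_eq) (auto simp: transl_apply)
  moreover have "vadd x y = transl x y"
    by (simp add: transl_apply vadd_comm)
  ultimately show "vadd x y \<in> U"
    using \<open>y \<in> U\<close> by blast
qed (rule U(2))

lemma is_block_vzero_maps_cosets: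
  assumes U: "is_block \<Gamma> U" "vzero \<in> U" shows "maps_cosets round_map U U"
  unfolding maps_cosets_def
proof
  fix v
  have "transl (round_map v) \<circ> round_map \<circ> transl v \<in> \<Gamma>"
    using transl_in_Gamma round_map_in_Gamma Gamma_comp_closed by blast
  then have "(transl (round_map v) \<circ> round_map \<circ> transl v) ` U = U"
    using U by (intro is_block_image_eq[where x = vzero]) (auto simp: transl_apply)
  then have "transl (round_map v) ` round_map ` transl v ` U = U"
    by (simp add: image_comp)
  then show "round_map ` transl v ` U = transl (round_map v) ` U"
    by (metis transl_image_transl_image)
qed

theorem primitive_Gamma: "primitive \<Gamma>"
  unfolding primitive_def
proof (intro conjI allI impI)
  show "transitive_on_UNIV \<Gamma>"
    unfolding transitive_on_UNIV_def
  proof (intro allI)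
    fix x y :: "'n \<times> 'm \<Rightarrow> bool"
    show "\<exists>f\<in>\<Gamma>. f x = y"
      using transl_in_Gamma by (intro bexI[of _ "transl (vadd x y)"]) (simp_all add: transl_apply)
  qed
next
  fix B :: "('n \<times> 'm \<Rightarrow> bool) set" assume B: "is_block \<Gamma> B"
  then obtain b where "b \<in> B" by (auto simp: is_block_def)
  define U where "U = transl b ` B"
  have U: "is_block \<Gamma> U" "vzero \<in> U"
    using is_block_transl_image[OF B] image_eqI[of vzero "transl b" b B] \<open>b \<in> B\<close>
    by (simp_all add: U_def transl_apply)
  obtain I where I: "U = brick_sum I" "lam h ` U = U"
    using round_map_cosets_brick_sum is_block_vzero_f2_subspace[OF U]
      is_block_vzero_maps_cosets[OF U] by blast
  have B_eq: "B = transl b ` U"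
    by (simp add: U_def)
  show "card B = 1 \<or> B = UNIV"
  proof (cases "I = {}")
    case True
    then show ?thesis using I B_eq by simp
  next
    case False
    then have "U = UNIV"
      using strongly_proper_mixing_image_brick_sum[OF lam_strongly_proper, of I I] I by simp
    then show ?thesis
      using B_eq bij_transl[of b] by (simp add: bij_is_surj)
  qed
qed

end

section \<open>No wreath-product decomposition\<close>

lemma three_dvd_card_of_fixpoint_free:
  fixes s :: "'a \<Rightarrow> 'a"
  assumes "finite A" "s ` A \<subseteq> A" "\<forall>x\<in>A. s x \<noteq> x" "\<forall>x\<in>A. s (s (s x)) = x"
  shows "3 dvd card A"
  using assms
proof (induction "card A" arbitrary: A rule: less_induct)
  case less
  show ?case
  proof (cases "A = {}")
    case False
    then obtain x where x: "x \<in> A" by auto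
    define B where "B = {x, s x, s (s x)}"
    have sx: "s x \<in> A" "s (s x) \<in> A"
      using x less.prems(2) by auto
    have "s x \<noteq> x" "s (s x) \<noteq> s x"
      using x sx less.prems(3) by auto
    moreover have "s (s x) \<noteq> x"
      using x less.prems(4) \<open>s x \<noteq> x\<close> by metis
    ultimately have card_B: "card B = 3"
      by (auto simp: B_def card_insert_if)
    have B_sub: "B \<subseteq> A"
      using x sx by (auto simp: B_def)
    have s_inj: "s y = s z \<Longrightarrow> y \<in> A \<Longrightarrow> z \<in> A \<Longrightarrow> y = z" for y z
      using less.prems(4) by metis
    have "s ` (A - B) \<subseteq> A - B"
    proof
      fix z assume "z \<in> s ` (A - B)"
      then obtain y where y: "y \<in> A" "y \<notin> B" "z = s y" by auto
      have "z \<noteq> x"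
        using y less.prems(4) by (auto simp: B_def)
      moreover have "z \<noteq> s x" "z \<noteq> s (s x)"
        using s_inj[of y x] s_inj[of y "s x"] y x sx by (auto simp: B_def)
      ultimately show "z \<in> A - B"
        using y less.prems(2) by (auto simp: B_def)
    qed
    moreover have "card A \<ge> 3"
      using card_B B_sub less.prems(1) card_mono by metis
    moreover have "card (A - B) = card A - 3"
      using card_B B_sub less.prems(1) by (simp add: card_Diff_subset finite_subset)
    ultimately have "3 dvd card (A - B)"
      using less.hyps[of "A - B"] less.prems by auto
    then show ?thesis
      using \<open>card (A - B) = card A - 3\<close> \<open>card A \<ge> 3\<close> by (metis dvd_diffD dvd_refl)
  qed simp
qed

lemma not_three_dvd_power_two: "\<not> 3 dvd (2::nat) ^ n"
  by (induction n) (simp_all, presburger)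

lemma nat_pow_eq_funpow:
  "monoid.mult M = (\<circ>) \<Longrightarrow> one M = id \<Longrightarrow> x [^]\<^bsub>M\<^esub> (n::nat) = x ^^ n"
  by (induction n) (simp_all add: funpow_Suc_right del: funpow.simps(2))

lemma SymV_nat_pow_eq_funpow: "bij s \<Longrightarrow> s [^]\<^bsub>SymV\<lparr>carrier := H\<rparr>\<^esub> (n::nat) = s ^^ n"
  by (induction n) (simp_all add: SymV_one_eq_id SymV_mult_eq_comp funpow_Suc_right del: funpow.simps(2))

lemma iso_transfer_pow_eq_one:
  assumes groups: "group G" "group H" and iso: "G \<cong> H"
    and c: "c \<in> carrier H" "c [^]\<^bsub>H\<^esub> (k::nat) = \<one>\<^bsub>H\<^esub>" "c \<noteq> \<one>\<^bsub>H\<^esub>"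
  shows "\<exists>s\<in>carrier G. s [^]\<^bsub>G\<^esub> k = \<one>\<^bsub>G\<^esub> \<and> s \<noteq> \<one>\<^bsub>G\<^esub>"
proof -
  obtain \<psi> where \<psi>: "\<psi> \<in> hom H G" "bij_betw \<psi> (carrier H) (carrier G)"
    using group.iso_sym[OF groups(1) iso] unfolding is_iso_def iso_def by blast
  have one: "\<psi> \<one>\<^bsub>H\<^esub> = \<one>\<^bsub>G\<^esub>"
    using hom_one[OF \<psi>(1) groups(2,1)] .
  have "\<psi> c [^]\<^bsub>G\<^esub> k = \<psi> (c [^]\<^bsub>H\<^esub> k)"
    using hom_nat_pow[OF \<psi>(1) c(1) groups(2,1)] by simp
  then have "\<psi> c [^]\<^bsub>G\<^esub> k = \<one>\<^bsub>G\<^esub>"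
    using c(2) one by simp
  moreover have "\<one>\<^bsub>H\<^esub> \<in> carrier H"
    using groups(2) by (simp add: group.is_monoid monoid.one_closed)
  then have "\<psi> c \<noteq> \<one>\<^bsub>G\<^esub>"
    using c(1,3) one bij_betw_imp_inj_on[OF \<psi>(2)] by (metis inj_onD)
  moreover have "\<psi> c \<in> carrier G"
    using bij_betwE[OF \<psi>(2)] c(1) by blast
  ultimately show ?thesis by blast
qed

lemma three_cycle_in_alt_group: "3 \<le> n \<Longrightarrow> cycle_of_list [1, 2, 3] \<in> carrier (alt_group n)"
  using three_cycles_incl[of n] by (rule subsetD) (intro CollectI exI[of _ "[1, 2, 3]"], auto)

lemma three_cycle_funpow_three: "cycle_of_list [1::nat, 2, 3] ^^ 3 = id"
  by (auto simp: fun_eq_iff transpose_def numeral_3_eq_3)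

lemma three_cycle_ne_id: "cycle_of_list [1::nat, 2, 3] \<noteq> id"
  by (auto simp: fun_eq_iff transpose_def)

lemma alt_sym_group_elem_order_three:
  assumes "3 \<le> n" "P = alt_group n \<or> P = sym_group n"
  shows "\<exists>c\<in>carrier P. c [^]\<^bsub>P\<^esub> (3::nat) = \<one>\<^bsub>P\<^esub> \<and> c \<noteq> \<one>\<^bsub>P\<^esub>"
proof -
  have "monoid.mult P = (\<circ>)" "one P = id"
    using assms(2) by (auto simp: alt_group_def sym_group_def)
  moreover have "cycle_of_list [1, 2, 3] \<in> carrier P"
    using three_cycle_in_alt_group[OF assms(1)] assms(2)
    by (auto simp: alt_group_carrier sym_group_carrier)
  ultimately show ?thesis
    using three_cycle_funpow_three three_cycle_ne_id by (metis nat_pow_eq_funpow)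
qed

text \<open>The clauses of \<open>wreath_structure\<close> used below.\<close>

locale wreath_decomposition = strong_round g lam phi h r
  for g :: "nat \<Rightarrow> 'n::finite \<Rightarrow> ('m::finite \<Rightarrow> bool) \<Rightarrow> ('m \<Rightarrow> bool)"
    and lam :: "nat \<Rightarrow> ((('n \<times> 'm) \<Rightarrow> bool) \<Rightarrow> (('n \<times> 'm) \<Rightarrow> bool))"
    and phi :: "'k \<Rightarrow> nat \<Rightarrow> (('n \<times> 'm) \<Rightarrow> bool)" and h r +
  fixes c :: nat and S T :: "nat \<Rightarrow> ((('n \<times> 'm) \<Rightarrow> bool) \<Rightarrow> (('n \<times> 'm) \<Rightarrow> bool)) set"
  assumes c_gt_1: "c > 1" and c_dvd: "c dvd CARD('n) * CARD('m)"
    and S_subgroup: "\<And>i. i < c \<Longrightarrow> subgroup (S i) SymV"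
    and S_iso: "\<And>i. i < c \<Longrightarrow> SymV\<lparr>carrier := S i\<rparr> \<cong> alt_group (2 ^ (CARD('n) * CARD('m) div c))
        \<or> SymV\<lparr>carrier := S i\<rparr> \<cong> sym_group (2 ^ (CARD('n) * CARD('m) div c))"
    and S_commute: "\<And>i j x y. i < c \<Longrightarrow> j < c \<Longrightarrow> i \<noteq> j \<Longrightarrow> x \<in> S i \<Longrightarrow> y \<in> S j
        \<Longrightarrow> x \<otimes>\<^bsub>SymV\<^esub> y = y \<otimes>\<^bsub>SymV\<^esub> x"
    and S_independent: "\<And>i. i < c \<Longrightarrow> S i \<inter> generate SymV (\<Union>j\<in>{..<c} - {i}. S j) = {\<one>\<^bsub>SymV\<^esub>}"
    and T_subset_S: "\<And>i. i < c \<Longrightarrow> T i \<subseteq> S i"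
    and card_T: "\<And>i. i < c \<Longrightarrow> card (T i) = 2 ^ (CARD('n) * CARD('m) div c)"
    and transl_group_eq: "transl_group = generate SymV (\<Union>i<c. T i)"
    and S_conj: "\<And>f i. f \<in> \<Gamma> \<Longrightarrow> i < c \<Longrightarrow> \<exists>j<c. conj_by f ` S i = S j"
begin

lemma factor_rank_pos: "1 \<le> CARD('n) * CARD('m) div c"
proof -
  have "c * (CARD('n) * CARD('m) div c) = CARD('n) * CARD('m)"
    using c_dvd by simp
  then show ?thesis
    by (cases "CARD('n) * CARD('m) div c = 0") auto
qed

lemma S_bij: "i < c \<Longrightarrow> s \<in> S i \<Longrightarrow> bij s"
  using subgroup.subset[OF S_subgroup] in_carrier_SymV_iff by blast

lemma S_comp_commute: "i < c \<Longrightarrow> j < c \<Longrightarrow> i \<noteq> j \<Longrightarrow> s \<in> S i \<Longrightarrow> t \<in> S j \<Longrightarrow> s \<circ> t = t \<circ> s"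
  using S_commute S_bij SymV_mult_eq_comp by metis

lemma S_inv_closed: "i < c \<Longrightarrow> s \<in> S i \<Longrightarrow> inv' s \<in> S i"
  using subgroup.m_inv_closed[OF S_subgroup] SymV_inv_eq_inv S_bij by metis

lemma T_transl: "i < c \<Longrightarrow> t \<in> T i \<Longrightarrow> \<exists>u. t = transl u"
proof -
  assume "i < c" "t \<in> T i"
  then have "t \<in> transl_group"
    unfolding transl_group_eq by (blast intro: generate.incl)
  then show ?thesis
    by (auto simp: transl_group_def)
qed

lemma T_nontrivial: "i < c \<Longrightarrow> \<exists>u. u \<noteq> vzero \<and> transl u \<in> T i"
proof (rule ccontr)
  assume i: "i < c" and none: "\<nexists>u. u \<noteq> vzero \<and> transl u \<in> T i"
  have "T i \<subseteq> {id}"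
  proof
    fix t assume "t \<in> T i"
    moreover obtain u where "t = transl u"
      using T_transl[OF i \<open>t \<in> T i\<close>] by blast
    ultimately have "u = vzero"
      using none by blast
    then show "t \<in> {id}"
      using \<open>t = transl u\<close> by simp
  qed
  then have "card (T i) \<le> 1"
    using card_mono[of "{id}" "T i"] by simp
  moreover have "(2::nat) ^ 1 \<le> 2 ^ (CARD('n) * CARD('m) div c)"
    using factor_rank_pos by (rule power_increasing) simp
  ultimately show False
    using card_T[OF i] by simp
qed

lemma S_inj: assumes "i < c" "j < c" "S i = S j" shows "i = j"
proof (rule ccontr)
  assume "i \<noteq> j"
  then have "S i \<subseteq> generate SymV (\<Union>l\<in>{..<c} - {j}. S l)"
    using assms(1) by (auto intro: generate.incl)
  then have "S j \<subseteq> {\<one>\<^bsub>SymV\<^esub>}"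
    using S_independent[OF assms(2)] assms(3) by blast
  then have "T j \<subseteq> {id}"
    using T_subset_S[OF assms(2)] SymV_one_eq_id by auto
  moreover obtain u where "u \<noteq> vzero" "transl u \<in> T j"
    using T_nontrivial[OF assms(2)] by blast
  ultimately show False
    using transl_eq_id_iff by blast
qed

definition cofactor_step :: "nat \<Rightarrow> (('n \<times> 'm \<Rightarrow> bool) \<times> ('n \<times> 'm \<Rightarrow> bool)) set" where
  "cofactor_step i = {(x, s x) | x s j. j < c \<and> j \<noteq> i \<and> s \<in> S j}"

definition cofactor_orbit :: "nat \<Rightarrow> ('n \<times> 'm \<Rightarrow> bool) set" where
  "cofactor_orbit i = {y. (vzero, y) \<in> (cofactor_step i)\<^sup>*}"

lemma S_preserves_cofactor_reach:
  assumes s: "j < c" "s \<in> S j" and i: "i < c" and xy: "(x, y) \<in> (cofactor_step i)\<^sup>*"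
  shows "(s x, s y) \<in> (cofactor_step i)\<^sup>*"
proof (cases "j = i")
  case True
  from xy show ?thesis
  proof (induction rule: rtrancl_induct)
    case (step y z)
    then obtain t l where t: "z = t y" "l < c" "l \<noteq> i" "t \<in> S l"
      by (auto simp: cofactor_step_def)
    have "s z = t (s y)"
      using S_comp_commute[OF i t(2) _ _ t(4), of s] t(1,3) s True by (metis comp_apply)
    then have "(s y, s z) \<in> cofactor_step i"
      using t by (auto simp: cofactor_step_def)
    then show ?case
      by (rule rtrancl_into_rtrancl[OF step.IH])
  qed simp
next
  case False
  have "(s x, inv' s (s x)) \<in> cofactor_step i"
    using S_inv_closed[OF s] False s(1) by (auto simp: cofactor_step_def)
  then have "(s x, x) \<in> cofactor_step i"
    using S_bij[OF s] by (simp add: bij_is_inj)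
  moreover have "(y, s y) \<in> cofactor_step i"
    using s False by (auto simp: cofactor_step_def)
  ultimately show ?thesis
    using xy by (meson converse_rtrancl_into_rtrancl rtrancl_into_rtrancl)
qed

lemma generate_T_bij: "t \<in> generate SymV (\<Union>j<c. T j) \<Longrightarrow> bij t"
proof -
  have "(\<Union>j<c. T j) \<subseteq> carrier SymV"
  proof
    fix t assume "t \<in> (\<Union>j<c. T j)"
    then obtain j where "j < c" "t \<in> T j" by blast
    then show "t \<in> carrier SymV"
      by (meson S_bij T_subset_S in_carrier_SymV_iff subsetD)
  qed
  then show "t \<in> generate SymV (\<Union>j<c. T j) \<Longrightarrow> bij t"
    using group.generate_in_carrier[OF group_SymV] in_carrier_SymV_iff by blast
qed

lemma generate_T_preserves_cofactor_reach:
  assumes i: "i < c" and t: "t \<in> generate SymV (\<Union>j<c. T j)" and xy: "(x, y) \<in> (cofactor_step i)\<^sup>*"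
  shows "(t x, t y) \<in> (cofactor_step i)\<^sup>*"
  using t xy
proof (induction arbitrary: x y rule: generate.induct)
  case one
  then show ?case by (simp add: SymV_one_eq_id)
next
  case (incl t)
  then obtain j where j: "j < c" "t \<in> S j"
    using T_subset_S by blast
  show ?case
    using j i incl.prems by (rule S_preserves_cofactor_reach)
next
  case (inv t)
  then obtain j where j: "j < c" "t \<in> S j"
    using T_subset_S by blast
  have "inv\<^bsub>SymV\<^esub> t = inv' t"
    using S_bij[OF j] by (rule SymV_inv_eq_inv)
  then show ?case
    using S_preserves_cofactor_reach[OF j(1) S_inv_closed[OF j] i inv.prems] by simp
next
  case (eng t1 t2)
  have "t1 \<otimes>\<^bsub>SymV\<^esub> t2 = t1 \<circ> t2"
    using generate_T_bij[OF eng.hyps(1)] generate_T_bij[OF eng.hyps(2)] by (rule SymV_mult_eq_comp)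
  then show ?case
    using eng.IH(1)[OF eng.IH(2)[OF eng.prems]] by simp
qed

lemma transl_preserves_cofactor_reach:
  assumes "i < c" "(x, y) \<in> (cofactor_step i)\<^sup>*"
  shows "(vadd x v, vadd y v) \<in> (cofactor_step i)\<^sup>*"
proof -
  have "transl v \<in> generate SymV (\<Union>j<c. T j)"
    by (simp add: transl_group_eq[symmetric] transl_group_def)
  from generate_T_preserves_cofactor_reach[OF assms(1) this assms(2)] show ?thesis
    by (simp add: transl_apply)
qed

lemma cofactor_reach_iff:
  "i < c \<Longrightarrow> (x, y) \<in> (cofactor_step i)\<^sup>* \<longleftrightarrow> vadd y x \<in> cofactor_orbit i"
  unfolding cofactor_orbit_def
  using transl_preserves_cofactor_reach[of i x y x] transl_preserves_cofactor_reach[of i vzero "vadd y x" x]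
  by auto

lemma transl_image_cofactor_orbit:
  assumes "i < c" shows "transl v ` cofactor_orbit i = {y. (v, y) \<in> (cofactor_step i)\<^sup>*}"
proof (intro equalityI subsetI)
  fix y assume "y \<in> transl v ` cofactor_orbit i"
  then show "y \<in> {y. (v, y) \<in> (cofactor_step i)\<^sup>*}"
    using cofactor_reach_iff[OF assms] by (auto simp: transl_apply vadd_comm)
next
  fix y assume "y \<in> {y. (v, y) \<in> (cofactor_step i)\<^sup>*}"
  then have "vadd y v \<in> cofactor_orbit i"
    using cofactor_reach_iff[OF assms] by simp
  then show "y \<in> transl v ` cofactor_orbit i"
    by (intro image_eqI[of _ _ "vadd y v"]) (simp_all add: transl_apply)
qed

lemma f2_subspace_cofactor_orbit:
  assumes i: "i < c" shows "f2_subspace (cofactor_orbit i)"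
  unfolding f2_subspace_def
proof (intro conjI ballI)
  show "vzero \<in> cofactor_orbit i"
    by (simp add: cofactor_orbit_def)
  fix x y assume "x \<in> cofactor_orbit i" "y \<in> cofactor_orbit i"
  then have "(vzero, x) \<in> (cofactor_step i)\<^sup>*" "(x, vadd y x) \<in> (cofactor_step i)\<^sup>*"
    using transl_preserves_cofactor_reach[OF i, of vzero y x] by (simp_all add: cofactor_orbit_def)
  then show "vadd x y \<in> cofactor_orbit i"
    by (simp add: cofactor_orbit_def vadd_comm)
qed

lemma cofactor_orbit_nontrivial:
  assumes "i < c" shows "\<exists>u\<in>cofactor_orbit i. u \<noteq> vzero"
proof -
  define j :: nat where "j = (if i = 0 then 1 else 0)"
  have j: "j < c" "j \<noteq> i"
    using c_gt_1 by (auto simp: j_def)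
  obtain u where u: "u \<noteq> vzero" "transl u \<in> T j"
    using T_nontrivial[OF j(1)] by blast
  then have "(vzero, transl u vzero) \<in> cofactor_step i"
    using j T_subset_S unfolding cofactor_step_def by blast
  then have "u \<in> cofactor_orbit i"
    by (auto simp: cofactor_orbit_def transl_apply)
  then show ?thesis
    using u(1) by blast
qed

definition conj_round :: "(('n \<times> 'm \<Rightarrow> bool) \<Rightarrow> ('n \<times> 'm \<Rightarrow> bool)) \<Rightarrow> ('n \<times> 'm \<Rightarrow> bool) \<Rightarrow> ('n \<times> 'm \<Rightarrow> bool)"
  where "conj_round s = round_map \<circ> s \<circ> inv' round_map"

lemma conj_round_apply: "conj_round s (round_map x) = round_map (s x)"
  using bij_round_map by (simp add: conj_round_def bij_is_inj)

lemma inv_round_map_apply [simp]: "inv' round_map (round_map x) = x"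
  using bij_round_map by (simp add: bij_is_inj)

lemma round_map_inv_apply [simp]: "round_map (inv' round_map x) = x"
  using bij_round_map by (simp add: bij_is_surj surj_f_inv_f)

lemma conj_round_inverse: "inv' round_map \<circ> conj_round s \<circ> round_map = s"
  by (simp add: conj_round_def fun_eq_iff)

lemma conj_by_inv_round_map: "bij s \<Longrightarrow> conj_by (inv' round_map) s = conj_round s"
proof -
  assume s: "bij s"
  have inv_bij: "bij (inv' round_map)"
    using bij_round_map by (rule bij_imp_bij_inv)
  have "inv\<^bsub>SymV\<^esub> (inv' round_map) = round_map"
    using SymV_inv_eq_inv[OF inv_bij] bij_round_map by (simp add: inv_inv_eq)
  moreover have "round_map \<otimes>\<^bsub>SymV\<^esub> s \<otimes>\<^bsub>SymV\<^esub> inv' round_map = round_map \<circ> s \<circ> inv' round_map"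
    using bij_round_map s inv_bij by (simp add: SymV_mult_eq_comp bij_comp)
  ultimately show ?thesis
    by (simp add: conj_by_def conj_round_def)
qed

definition conj_index :: "nat \<Rightarrow> nat" where
  "conj_index j = (SOME k. k < c \<and> conj_round ` S j = S k)"

lemma conj_index: assumes "j < c" shows "conj_index j < c" "conj_round ` S j = S (conj_index j)"
proof -
  have "inv' round_map \<in> \<Gamma>"
    using Gamma_inv_closed[OF round_map_in_Gamma] .
  then obtain k where "k < c" "conj_by (inv' round_map) ` S j = S k"
    using S_conj assms by blast
  moreover have "conj_by (inv' round_map) ` S j = conj_round ` S j"
    using S_bij[OF assms] conj_by_inv_round_map by (auto intro!: image_cong)
  ultimately have "\<exists>k. k < c \<and> conj_round ` S j = S k"
    by auto
  then have "conj_index j < c \<and> conj_round ` S j = S (conj_index j)"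
    unfolding conj_index_def by (rule someI_ex)
  then show "conj_index j < c" "conj_round ` S j = S (conj_index j)"
    by blast+
qed

lemma inj_on_conj_index: "inj_on conj_index {..<c}"
proof (rule inj_onI)
  fix i j assume "i \<in> {..<c}" "j \<in> {..<c}" "conj_index i = conj_index j"
  then have "conj_round ` S i = conj_round ` S j"
    using conj_index by simp
  moreover have "inj conj_round"
    by (rule injI) (metis conj_round_inverse)
  ultimately have "S i = S j"
    by (simp add: inj_image_eq_iff)
  then show "i = j"
    using S_inj \<open>i \<in> {..<c}\<close> \<open>j \<in> {..<c}\<close> by blast
qed

lemma conj_index_image: "conj_index ` {..<c} = {..<c}"
  using endo_inj_surj[of "{..<c}" conj_index] inj_on_conj_index conj_index(1) by auto

lemma round_map_cofactor_reach:
  assumes i: "i < c" and xy: "(x, y) \<in> (cofactor_step i)\<^sup>*"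
  shows "(round_map x, round_map y) \<in> (cofactor_step (conj_index i))\<^sup>*"
  using xy
proof (induction rule: rtrancl_induct)
  case (step y z)
  then obtain t j where t: "z = t y" "j < c" "j \<noteq> i" "t \<in> S j"
    by (auto simp: cofactor_step_def)
  have "conj_round t \<in> S (conj_index j)"
    using conj_index(2)[OF t(2)] t(4) by blast
  moreover have "conj_index j \<noteq> conj_index i"
    using inj_on_conj_index t(2,3) i by (auto dest: inj_onD)
  ultimately have "(round_map y, conj_round t (round_map y)) \<in> cofactor_step (conj_index i)"
    using conj_index(1)[OF t(2)] unfolding cofactor_step_def by blast
  then have "(round_map y, round_map z) \<in> cofactor_step (conj_index i)"
    using t(1) by (simp add: conj_round_apply)
  then show ?case
    by (rule rtrancl_into_rtrancl[OF step.IH])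
qed simp

lemma inv_round_map_cofactor_reach:
  assumes i: "i < c" and xy: "(x, y) \<in> (cofactor_step (conj_index i))\<^sup>*"
  shows "(inv' round_map x, inv' round_map y) \<in> (cofactor_step i)\<^sup>*"
  using xy
proof (induction rule: rtrancl_induct)
  case (step y z)
  then obtain t' j' where t': "z = t' y" "j' < c" "j' \<noteq> conj_index i" "t' \<in> S j'"
    by (auto simp: cofactor_step_def)
  obtain j where j: "j < c" "j' = conj_index j"
    using conj_index_image t'(2) by (metis imageE lessThan_iff)
  obtain t where t: "t \<in> S j" "t' = conj_round t"
    using conj_index(2)[OF j(1)] t'(4) j(2) by blast
  have "inv' round_map z = t (inv' round_map y)"
    using t'(1) t(2) by (simp add: conj_round_def)
  moreover have "(inv' round_map y, t (inv' round_map y)) \<in> cofactor_step i"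
    using t(1) j t'(3) unfolding cofactor_step_def by blast
  ultimately show ?case
    using rtrancl_into_rtrancl[OF step.IH] by simp
qed simp

lemma maps_cosets_round_map_cofactor_orbit:
  assumes i: "i < c"
  shows "maps_cosets round_map (cofactor_orbit i) (cofactor_orbit (conj_index i))"
  unfolding maps_cosets_def
proof
  fix v
  show "round_map ` transl v ` cofactor_orbit i = transl (round_map v) ` cofactor_orbit (conj_index i)"
    unfolding transl_image_cofactor_orbit[OF i] transl_image_cofactor_orbit[OF conj_index(1)[OF i]]
  proof (intro equalityI subsetI)
    fix z assume "z \<in> round_map ` {y. (v, y) \<in> (cofactor_step i)\<^sup>*}"
    then show "z \<in> {y. (round_map v, y) \<in> (cofactor_step (conj_index i))\<^sup>*}"
      using round_map_cofactor_reach[OF i] by blast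
  next
    fix z assume "z \<in> {y. (round_map v, y) \<in> (cofactor_step (conj_index i))\<^sup>*}"
    then have "(inv' round_map (round_map v), inv' round_map z) \<in> (cofactor_step i)\<^sup>*"
      using inv_round_map_cofactor_reach[OF i] by blast
    then have "(v, inv' round_map z) \<in> (cofactor_step i)\<^sup>*"
      by simp
    moreover have "z = round_map (inv' round_map z)"
      by simp
    ultimately show "z \<in> round_map ` {y. (v, y) \<in> (cofactor_step i)\<^sup>*}"
      by blast
  qed
qed

lemma cofactor_orbit_eq_UNIV:
  assumes i: "i < c" shows "cofactor_orbit i = UNIV"
proof -
  have i': "conj_index i < c"
    using conj_index(1)[OF i] .
  obtain I where I: "cofactor_orbit i = brick_sum I" "lam h ` cofactor_orbit i = cofactor_orbit (conj_index i)"
    using round_map_cosets_brick_sum f2_subspace_cofactor_orbit[OF i] f2_subspace_cofactor_orbit[OF i']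
      maps_cosets_round_map_cofactor_orbit[OF i] by blast
  obtain J where J: "cofactor_orbit (conj_index i) = brick_sum J"
    using round_map_cosets_brick_sum f2_subspace_cofactor_orbit[OF i'] f2_subspace_cofactor_orbit[OF conj_index(1)[OF i']]
      maps_cosets_round_map_cofactor_orbit[OF i'] by blast
  have "I \<noteq> {}" "J \<noteq> {}"
    using cofactor_orbit_nontrivial[OF i] cofactor_orbit_nontrivial[OF i'] I(1) J by auto
  moreover have "lam h ` brick_sum I = brick_sum J"
    using I J by simp
  ultimately have "I = UNIV"
    using strongly_proper_mixing_image_brick_sum[OF lam_strongly_proper] by blast
  then show ?thesis
    using I(1) by simp
qed

lemma S_fixpoint_imp_id:
  assumes s: "i < c" "s \<in> S i" and fixed: "s x = x" shows "s = id"
proof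
  fix y
  have "(x, y) \<in> (cofactor_step i)\<^sup>*"
    using cofactor_reach_iff[OF s(1)] cofactor_orbit_eq_UNIV[OF s(1)] by simp
  then have "s y = y"
  proof (induction rule: rtrancl_induct)
    case (step y z)
    then obtain t j where t: "z = t y" "j < c" "j \<noteq> i" "t \<in> S j"
      by (auto simp: cofactor_step_def)
    have "s \<circ> t = t \<circ> s"
      using S_comp_commute[OF s(1) t(2) _ s(2) t(4)] t(3) by simp
    then have "s (t y) = t (s y)"
      by (metis comp_apply)
    then show ?case
      using step.IH t(1) by simp
  qed (rule fixed)
  then show "s y = id y" by simp
qed

lemma factor_rank_ge_two_absurd:
  assumes rank: "2 \<le> CARD('n) * CARD('m) div c" shows False
proof -
  let ?n = "2 ^ (CARD('n) * CARD('m) div c) :: nat"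
  have c0: "0 < c"
    using c_gt_1 by simp
  have "(2::nat) ^ 2 \<le> ?n"
    using rank by (rule power_increasing) simp
  then have n: "3 \<le> ?n" by simp
  obtain P where P: "P = alt_group ?n \<or> P = sym_group ?n" "SymV\<lparr>carrier := S 0\<rparr> \<cong> P"
    using S_iso[OF c0] by blast
  have "group P"
    using P(1) alt_group_is_group sym_group_is_group by blast
  moreover have "group (SymV\<lparr>carrier := S 0\<rparr>)"
    using subgroup.subgroup_is_group[OF S_subgroup[OF c0] group_SymV] .
  moreover obtain p where "p \<in> carrier P" "p [^]\<^bsub>P\<^esub> (3::nat) = \<one>\<^bsub>P\<^esub>" "p \<noteq> \<one>\<^bsub>P\<^esub>"
    using alt_sym_group_elem_order_three[OF n P(1)] by blast
  ultimately obtain s where s: "s \<in> S 0" "s [^]\<^bsub>SymV\<lparr>carrier := S 0\<rparr>\<^esub> (3::nat) = id" "s \<noteq> id"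
    using iso_transfer_pow_eq_one[OF _ _ P(2)] by (fastforce simp: SymV_one_eq_id)
  have "s ^^ 3 = id"
    using s(2) SymV_nat_pow_eq_funpow[OF S_bij[OF c0 s(1)]] by simp
  then have "\<forall>x. s (s (s x)) = x"
    by (simp add: numeral_3_eq_3 fun_eq_iff)
  moreover have "\<forall>x. s x \<noteq> x"
    using S_fixpoint_imp_id[OF c0 s(1)] s(3) by blast
  ultimately have "3 dvd card (UNIV :: ('n \<times> 'm \<Rightarrow> bool) set)"
    by (intro three_dvd_card_of_fixpoint_free) auto
  then show False
    by (simp add: card_UNIV_vec not_three_dvd_power_two)
qed

lemma S_eq_T_if_factor_rank_one:
  assumes rank: "CARD('n) * CARD('m) div c = 1" and j: "j < c"
  shows "S j = T j"
proof -
  have "card (carrier (alt_group 2)) = 1"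
    using alt_group_card_carrier[of 2] by simp
  moreover have "card (carrier (sym_group 2)) = 2"
    by (simp add: sym_group_card_carrier)
  ultimately have "card (S j) \<le> 2"
    using S_iso[OF j] rank iso_same_card by fastforce
  moreover have "card (T j) = 2"
    using card_T[OF j] rank by simp
  ultimately show ?thesis
    using T_subset_S[OF j] by (metis card_subset_eq finite card_mono le_antisym)
qed

lemma transl_mem_generate_cofactors_if_factor_rank_one:
  assumes rank: "CARD('n) * CARD('m) div c = 1" and y: "(vzero, y) \<in> (cofactor_step i)\<^sup>*"
  shows "transl y \<in> generate SymV (\<Union>j\<in>{..<c} - {i}. S j)"
  using y
proof (induction rule: rtrancl_induct)
  case base
  have "\<one>\<^bsub>SymV\<^esub> \<in> generate SymV (\<Union>j\<in>{..<c} - {i}. S j)"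
    by (rule generate.one)
  then show ?case
    by (simp add: SymV_one_eq_id id_def)
next
  case (step y z)
  then obtain s j where s: "z = s y" "j < c" "j \<noteq> i" "s \<in> S j"
    by (auto simp: cofactor_step_def)
  obtain w where w: "s = transl w"
    using T_transl[OF s(2)] S_eq_T_if_factor_rank_one[OF rank s(2)] s(4) by blast
  have "s \<in> generate SymV (\<Union>j\<in>{..<c} - {i}. S j)"
    using s(2-4) by (auto intro: generate.incl)
  then have "s \<otimes>\<^bsub>SymV\<^esub> transl y \<in> generate SymV (\<Union>j\<in>{..<c} - {i}. S j)"
    using step.IH by (rule generate.eng)
  moreover have "s \<otimes>\<^bsub>SymV\<^esub> transl y = transl z"
    using w s(1) by (simp add: SymV_mult_eq_comp bij_transl transl_transl vadd_comm transl_apply)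
  ultimately show ?case
    by simp
qed

lemma factor_rank_one_absurd:
  assumes rank: "CARD('n) * CARD('m) div c = 1" shows False
proof -
  have c0: "0 < c"
    using c_gt_1 by simp
  obtain u where u: "u \<noteq> vzero" "transl u \<in> T 0"
    using T_nontrivial[OF c0] by blast
  have "(vzero, u) \<in> (cofactor_step 0)\<^sup>*"
    using cofactor_orbit_eq_UNIV[OF c0] unfolding cofactor_orbit_def by blast
  then have "transl u \<in> S 0 \<inter> generate SymV (\<Union>j\<in>{..<c} - {0}. S j)"
    using transl_mem_generate_cofactors_if_factor_rank_one[OF rank] u(2) T_subset_S[OF c0] by blast
  then have "transl u = id"
    using S_independent[OF c0] by (simp add: SymV_one_eq_id)
  then show False
    using u(1) by (simp add: transl_eq_id_iff)
qed

theorem inconsistent: False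
  using factor_rank_pos factor_rank_one_absurd factor_rank_ge_two_absurd by linarith

end

context strong_round
begin

theorem not_wreath_structure_Gamma: "\<not> wreath_structure (CARD('n) * CARD('m)) transl_group \<Gamma>"
  unfolding wreath_structure_def
  apply (rule notI, elim exE conjE)
  subgoal premises ws for c S T
  proof -
    have "wreath_decomposition g lam phi h r c S T"
    proof (rule wreath_decomposition.intro[OF strong_round_axioms wreath_decomposition_axioms.intro])
      show "subgroup (S i) SymV" if "i < c" for i
        using ws(3) that by blast
      show "SymV\<lparr>carrier := S i\<rparr> \<cong> alt_group (2 ^ (CARD('n) * CARD('m) div c))
          \<or> SymV\<lparr>carrier := S i\<rparr> \<cong> sym_group (2 ^ (CARD('n) * CARD('m) div c))" if "i < c" for i
        using ws(4) that by blast
      show "x \<otimes>\<^bsub>SymV\<^esub> y = y \<otimes>\<^bsub>SymV\<^esub> x"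
        if "i < c" "j < c" "i \<noteq> j" "x \<in> S i" "y \<in> S j" for i j x y
        using ws(5) that by blast
      show "S i \<inter> generate SymV (\<Union>j\<in>{..<c} - {i}. S j) = {\<one>\<^bsub>SymV\<^esub>}" if "i < c" for i
        using ws(6) that by blast
      show "T i \<subseteq> S i" "card (T i) = 2 ^ (CARD('n) * CARD('m) div c)" if "i < c" for i
        using ws(8) that by blast+
      show "\<exists>j<c. conj_by f ` S i = S j" if "f \<in> \<Gamma>" "i < c" for f i
        using ws(10) that by blast
    qed (fact ws(1,2,9))+
    then show False
      by (rule wreath_decomposition.inconsistent)
  qed
  done

end

theorem proposition4p4:
  fixes l h :: nat
    and g :: "nat \<Rightarrow> 'n::finite \<Rightarrow> ('m::finite \<Rightarrow> bool) \<Rightarrow> ('m \<Rightarrow> bool)"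
    and lam :: "nat \<Rightarrow> ((('n \<times> 'm) \<Rightarrow> bool) \<Rightarrow> (('n \<times> 'm) \<Rightarrow> bool))"
    and phi :: "'k \<Rightarrow> nat \<Rightarrow> (('n \<times> 'm) \<Rightarrow> bool)"
  assumes m_gt: "CARD('m) > 1" and n_gt: "CARD('n) > 1"
    and cipher: "tb_cipher l g lam phi"
    and h_in: "h \<in> {1..l}"
    and strong: "strongly_proper_round lam phi h"
    and bricks: "\<exists>r::nat.
        (1 < r \<and> r < CARD('m) \<and>
           (\<forall>i. diff_uniform (2 ^ r) (g h i) \<and> strongly_anti_invariant (r - 1) (g h i)))
      \<or> (1 \<le> r \<and> r < CARD('m) \<and>
           (\<forall>i. weakly_uniform (2 ^ r) (g h i) \<and> strongly_anti_invariant r (g h i)))"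
  shows "primitive (Gamma_h g lam phi h) \<and>
         \<not> wreath_structure (CARD('n) * CARD('m)) transl_group (Gamma_h g lam phi h)"
proof -
  have round_h: "(\<forall>i. bij (g h i)) \<and> bricklayer (g h) vzero = vzero \<and> in_GL (lam h)"
    using cipher h_in unfolding tb_cipher_def by blast
  obtain r where "\<forall>i. uniform_anti_invariant r (g h i)"
    using bricks unfolding uniform_anti_invariant_def by blast
  then interpret strong_round g lam phi h r
    using round_h strong bricklayer_vzero_imp_brick_vzero[of "g h"]
    by unfold_locales (simp_all add: strongly_proper_round_def proper_round_def)
  show ?thesis
    using primitive_Gamma not_wreath_structure_Gamma by blast
qed

end
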